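(* Let $\xi>0$ with $\xi\neq1$, $\omega_0>0$, and define $\omega^2(k)=\frac{\omega_0^2}{\xi^2}\big((\xi-\cos k)^2+\sin^2 k\big)$, $\Omega_0=\frac{\omega_0}{\xi}|1-\xi|$, $\Omega_D=\frac{\omega_0}{\xi}(1+\xi)$, and for an integer $n$ and real $\omega$ with $\omega^2(k)\ne\omega^2$ for all $k$, $$\mathcal G_n(\omega)=\frac{1}{2\pi}\int_0^{2\pi}\frac{e^{ikn}}{\omega^2(k)-\omega^2}\,dk .$$ Then for $0\le\omega<\Omega_0$ and every integer $n$, $$\mathcal G_n(\omega)=\frac{1}{\sqrt{(\Omega_D^2-\omega^2)(\Omega_0^2-\omega^2)}}\left(\frac{\Omega_D^2+\Omega_0^2-2\omega^2-2\sqrt{(\Omega_D^2-\omega^2)(\Omega_0^2-\omega^2)}}{\Omega_D^2-\Omega_0^2}\right)^{|n|},$$ which is real-valued.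
   Context: $\mathcal G_n$ is the frequency-domain lattice Green's function (entry with $|p-q|=n$) of the exponentially graded linear chain (masses $m_0\xi^{2p}$, spring constants $m_0\xi^{2p}\omega_0^2$) in the limit of infinitely many particles, in the symmetrized variables $y_p=\xi^pu_p$; $\Omega_0$ and $\Omega_D$ are the lowest and highest eigenfrequencies. *)

theory Defs
  imports "HOL-Analysis.Analysis"
begin

definition omega_sq :: "real \<Rightarrow> real \<Rightarrow> real \<Rightarrow> real" where
  "omega_sq xi w0 k = (w0^2 / xi^2) * ((xi - cos k)^2 + (sin k)^2)"

definition Omega_0 :: "real \<Rightarrow> real \<Rightarrow> real" where
  "Omega_0 xi w0 = (w0 / xi) * \<bar>1 - xi\<bar>"

definition Omega_D :: "real \<Rightarrow> real \<Rightarrow> real" where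
  "Omega_D xi w0 = (w0 / xi) * (1 + xi)"

definition G_lat :: "real \<Rightarrow> real \<Rightarrow> int \<Rightarrow> real \<Rightarrow> complex" where
  "G_lat xi w0 n w = complex_of_real (1 / (2 * pi)) *
     integral {0..2*pi} (\<lambda>k. cis (k * real_of_int n) / complex_of_real (omega_sq xi w0 k - w^2))"

end

theory Submission
  imports Defs
begin

text \<open>
  The dispersion relation reads omega^2(k) = A' - B cos k with A' = (Omega_D^2 + Omega_0^2) / 2 and
  B = (Omega_D^2 - Omega_0^2) / 2, so for 0 \<le> w < Omega_0 the denominator is A - B cos k with
  A > B > 0 and A \<plusminus> B = Omega_{D,0}^2 - w^2. Factoring A - B cos k = c (1 - r e^{ik}) (1 - r e^{-ik})
  with 0 < r < 1 and splitting into partial fractions, each term is a geometric series in e^{\<plusminus>ik},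
  whose Fourier coefficients are 2 pi r^m or 0. Hence G_n = r^|n| / sqrt (A^2 - B^2), and
  r = (A - sqrt (A^2 - B^2)) / B is exactly the ratio in the claimed formula.
\<close>

lemma integral_cis_multiple:
  fixes j :: int
  shows "integral {0..2*pi} (\<lambda>k. cis (k * of_int j)) = (if j = 0 then of_real (2*pi) else 0)"
proof (cases "j = 0")
  case True
  then show ?thesis by (simp add: scaleR_conv_of_real)
next
  case False
  have deriv: "((\<lambda>k. cis (k * of_int j)) has_vector_derivative (of_int j * \<i> * cis (x * of_int j)))
      (at x within {0..2*pi})" for x
    unfolding has_vector_derivative_def
    by (rule has_derivative_eq_rhs, rule has_derivative_cis, rule derivative_eq_intros,
        rule derivative_eq_intros) (auto simp: fun_eq_iff scaleR_conv_of_real algebra_simps)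
  have "((\<lambda>x. of_int j * \<i> * cis (x * of_int j)) has_integral
         (cis (2*pi * of_int j) - cis (0 * of_int j))) {0..2*pi}"
    by (rule fundamental_theorem_of_calculus) (use deriv in auto)
  moreover have "cis (2*pi * of_int j) - cis (0 * of_int j) = 0" by simp
  ultimately have "integral {0..2*pi} (\<lambda>x. of_int j * \<i> * cis (x * of_int j)) = 0"
    using integral_unique by metis
  then have "of_int j * \<i> * integral {0..2*pi} (\<lambda>x. cis (x * of_int j)) = 0"
    by (simp add: mult.assoc)
  with False show ?thesis by simp
qed

lemma norm_one_minus_scaled_cis_ge:
  assumes "0 \<le> r"
  shows "1 - r \<le> norm (1 - of_real r * cis x)"
  using norm_triangle_ineq2[of 1 "of_real r * cis x"] assms by (simp add: norm_mult)

lemma one_minus_scaled_cis_nonzero: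
  assumes "0 \<le> r" "r < 1"
  shows "1 - of_real r * cis x \<noteq> 0"
  using norm_one_minus_scaled_cis_ge[OF assms(1), of x] assms(2) by auto

definition geom_coeff :: "real \<Rightarrow> int \<Rightarrow> int \<Rightarrow> complex" where
  "geom_coeff r s m =
     integral {0..2*pi} (\<lambda>k. cis (k * of_int (s*m)) / (1 - of_real r * cis (k * of_int s)))"

lemma geom_coeff_integrable:
  assumes "0 \<le> r" "r < 1"
  shows "(\<lambda>k. cis (k * of_int (s*m)) / (1 - of_real r * cis (k * of_int s))) integrable_on {0..2*pi}"
  by (rule integrable_continuous_interval)
     (intro continuous_intros, use one_minus_scaled_cis_nonzero[OF assms] in auto)

lemma norm_geom_coeff_le:
  assumes "0 \<le> r" "r < 1"
  shows "norm (geom_coeff r s m) \<le> 2*pi / (1 - r)"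
proof -
  have "norm (geom_coeff r s m) \<le> (1 / (1 - r)) * Henstock_Kurzweil_Integration.content (cbox 0 (2*pi))"
    unfolding geom_coeff_def
  proof (rule has_integral_bound)
    show "0 \<le> 1 / (1 - r)" using assms by simp
    show "((\<lambda>k. cis (k * of_int (s*m)) / (1 - of_real r * cis (k * of_int s))) has_integral
        integral {0..2*pi} (\<lambda>k. cis (k * of_int (s*m)) / (1 - of_real r * cis (k * of_int s))))
        (cbox 0 (2*pi))"
      using integrable_integral[OF geom_coeff_integrable[OF assms]] by simp
    fix x
    have "1 / norm (1 - of_real r * cis (x * of_int s)) \<le> 1 / (1 - r)"
      using norm_one_minus_scaled_cis_ge[OF assms(1), of "x * of_int s"] assms
      by (intro divide_left_mono) (auto intro!: mult_pos_pos)
    then show "norm (cis (x * of_int (s*m)) / (1 - of_real r * cis (x * of_int s))) \<le> 1 / (1 - r)"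
      by (simp add: norm_divide)
  qed
  then show ?thesis by simp
qed

lemma geom_coeff_recurrence:
  assumes "0 \<le> r" "r < 1" "s \<noteq> 0"
  shows "geom_coeff r s m = of_real r * geom_coeff r s (m + 1) + (if m = 0 then of_real (2*pi) else 0)"
proof -
  have nz: "1 - of_real r * cis (k * of_int s) \<noteq> 0" for k
    using one_minus_scaled_cis_nonzero[OF assms(1,2)] .
  note integ = geom_coeff_integrable[OF assms(1,2)]
  have "geom_coeff r s m - of_real r * geom_coeff r s (m + 1) =
      integral {0..2*pi} (\<lambda>k. cis (k * of_int (s*m)) / (1 - of_real r * cis (k * of_int s))
        - of_real r * (cis (k * of_int (s*(m+1))) / (1 - of_real r * cis (k * of_int s))))"
    unfolding geom_coeff_def
    by (simp only: integral_diff[OF integ integrable_on_mult_right[OF integ]] integral_mult_right)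
  also have "\<dots> = integral {0..2*pi} (\<lambda>k. cis (k * of_int (s*m)))"
  proof (rule integral_cong)
    fix k
    have "cis (k * of_int (s*(m+1))) = cis (k * of_int (s*m)) * cis (k * of_int s)"
      by (simp add: cis_mult algebra_simps)
    then show "cis (k * of_int (s*m)) / (1 - of_real r * cis (k * of_int s))
        - of_real r * (cis (k * of_int (s*(m+1))) / (1 - of_real r * cis (k * of_int s)))
        = cis (k * of_int (s*m))"
      using nz[of k] by (simp add: divide_simps) (simp add: algebra_simps)
  qed
  also have "\<dots> = (if m = 0 then of_real (2*pi) else 0)"
    using integral_cis_multiple[of "s*m"] assms(3) by simp
  finally show ?thesis by (simp add: algebra_simps)
qed

text \<open>For m \<ge> 1 the recurrence has no source term, so the coefficient is r^N times a bounded
  quantity for every N.\<close>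
lemma geom_coeff_pos_eq_0:
  assumes "0 < r" "r < 1" "s \<noteq> 0" "m \<ge> 1"
  shows "geom_coeff r s m = 0"
proof -
  have shift: "geom_coeff r s m = of_real (r^N) * geom_coeff r s (m + int N)" for N
  proof (induction N)
    case (Suc N)
    have "geom_coeff r s (m + int N) = of_real r * geom_coeff r s (m + int N + 1)"
      using geom_coeff_recurrence[of r s "m + int N"] assms by simp
    with Suc show ?case by (simp add: algebra_simps)
  qed simp
  have bound: "norm (geom_coeff r s m) \<le> r^N * (2*pi / (1 - r))" for N
  proof -
    have "norm (geom_coeff r s m) = r^N * norm (geom_coeff r s (m + int N))"
      using shift[of N] assms by (simp add: norm_mult norm_power)
    also have "\<dots> \<le> r^N * (2*pi / (1 - r))"
      using norm_geom_coeff_le[of r s "m + int N"] assms by (intro mult_left_mono) auto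
    finally show ?thesis .
  qed
  have "(\<lambda>N. r^N * (2*pi / (1 - r))) \<longlonglongrightarrow> 0 * (2*pi / (1 - r))"
    by (intro tendsto_intros LIMSEQ_power_zero) (use assms in auto)
  then have "norm (geom_coeff r s m) \<le> 0"
    by (intro LIMSEQ_le_const[where X="\<lambda>N. r^N * (2*pi / (1 - r))"]) (use bound in auto)
  then show ?thesis by simp
qed

lemma geom_coeff_nonpos:
  assumes "0 < r" "r < 1" "s \<noteq> 0"
  shows "geom_coeff r s (- int j) = of_real (2*pi * r^j)"
proof (induction j)
  case 0
  show ?case using geom_coeff_recurrence[of r s 0] geom_coeff_pos_eq_0[of r s 1] assms by simp
next
  case (Suc j)
  have "geom_coeff r s (- int (Suc j)) = of_real r * geom_coeff r s (- int j)"
    using geom_coeff_recurrence[of r s "- int (Suc j)"] assms by simp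
  with Suc show ?case by (simp add: algebra_simps)
qed

lemma geom_coeff_eq:
  assumes "0 < r" "r < 1" "s \<noteq> 0"
  shows "geom_coeff r s m = (if m \<le> 0 then of_real (2*pi * r^nat (-m)) else 0)"
proof (cases "m \<le> 0")
  case True
  then have "m = - int (nat (-m))" by simp
  then show ?thesis using True geom_coeff_nonpos[OF assms, of "nat (-m)"] by metis
qed (use geom_coeff_pos_eq_0[OF assms] in auto)

lemma cosine_denominator_partial_fractions:
  fixes z w :: complex and c r :: real
  assumes "z \<noteq> 0" "1 - of_real r * z \<noteq> 0" "1 - of_real r * inverse z \<noteq> 0" "c \<noteq> 0" "r^2 \<noteq> 1"
  shows "w / (of_real (c*(1+r^2)) - of_real (c*r) * (z + inverse z))
       = (1 / of_real (c*(1-r^2))) * (w / (1 - of_real r * z) + of_real r * ((w/z) / (1 - of_real r * inverse z)))"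
proof -
  have inv: "1 - of_real r * inverse z = (z - of_real r) / z" using assms(1) by (simp add: field_simps)
  have "z - of_real r \<noteq> 0" using assms(3) inv by auto
  moreover have "(1::complex) - of_real r ^ 2 \<noteq> 0"
    using assms(5) by (metis eq_iff_diff_eq_0 of_real_1 of_real_eq_iff of_real_power)
  moreover have "of_real (c*(1+r^2)) - of_real (c*r) * (z + inverse z)
      = of_real c * (1 - of_real r * z) * (z - of_real r) / z"
    using assms(1) by (simp add: field_simps power2_eq_square)
  ultimately show ?thesis
    unfolding inv using assms(1,2,4) by (simp add: divide_simps) (simp add: algebra_simps power2_eq_square)
qed

lemma integral_cis_div_factored_cosine:
  assumes "0 < r" "r < 1" "c \<noteq> 0"
  shows "integral {0..2*pi} (\<lambda>k. cis (k * of_int n) / of_real (c*(1+r^2) - 2*c*r * cos k))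
       = of_real (2*pi * r^nat \<bar>n\<bar> / (c*(1-r^2)))"
proof -
  define g1 where "g1 = (\<lambda>k. cis (k * of_int (1*n)) / (1 - of_real r * cis (k * of_int 1)))"
  define g2 where "g2 = (\<lambda>k. cis (k * of_int ((-1)*(1-n))) / (1 - of_real r * cis (k * of_int (-1))))"
  have r2: "r^2 \<noteq> 1" using assms(1,2) by (simp add: power2_eq_square) (smt (verit) mult_less_cancel_left1)
  have split: "cis (k * of_int n) / of_real (c*(1+r^2) - 2*c*r * cos k)
      = (1 / of_real (c*(1-r^2))) * (g1 k + of_real r * g2 k)" for k
  proof -
    have den: "complex_of_real (c*(1+r^2) - 2*c*r * cos k)
        = of_real (c*(1+r^2)) - of_real (c*r) * (cis k + inverse (cis k))"
      by (simp add: complex_eq_iff)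
    have "cis (k * of_int n) / of_real (c*(1+r^2) - 2*c*r * cos k)
        = cis (k * of_int n) / (of_real (c*(1+r^2)) - of_real (c*r) * (cis k + inverse (cis k)))"
      by (simp only: den)
    also have "\<dots> = (1 / of_real (c*(1-r^2))) * (cis (k * of_int n) / (1 - of_real r * cis k)
          + of_real r * ((cis (k * of_int n) / cis k) / (1 - of_real r * inverse (cis k))))"
      using one_minus_scaled_cis_nonzero[of r k] one_minus_scaled_cis_nonzero[of r "-k"] assms r2
      by (intro cosine_denominator_partial_fractions) auto
    also have "cis (k * of_int n) / cis k = cis (k * of_int ((-1)*(1-n)))"
      by (simp add: cis_divide algebra_simps)
    finally show ?thesis unfolding g1_def g2_def by simp
  qed
  have "integral {0..2*pi} g1 = geom_coeff r 1 n" "integral {0..2*pi} g2 = geom_coeff r (-1) (1-n)"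
    unfolding g1_def g2_def geom_coeff_def by simp_all
  moreover have "g1 integrable_on {0..2*pi}" "g2 integrable_on {0..2*pi}"
    unfolding g1_def g2_def using assms(1,2) by (intro geom_coeff_integrable; simp)+
  ultimately have "integral {0..2*pi} (\<lambda>k. cis (k * of_int n) / of_real (c*(1+r^2) - 2*c*r * cos k))
      = (1 / of_real (c*(1-r^2))) * (geom_coeff r 1 n + of_real r * geom_coeff r (-1) (1-n))"
    unfolding split by (simp add: integral_mult_right integral_add integrable_on_mult_right)
  also have "geom_coeff r 1 n + of_real r * geom_coeff r (-1) (1-n) = of_real (2*pi * r^nat \<bar>n\<bar>)"
  proof (cases "n \<le> 0")
    case False
    then have "nat \<bar>n\<bar> = Suc (nat (n - 1))" by simp
    with False show ?thesis using assms(1,2) by (simp add: geom_coeff_eq)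
  qed (use assms(1,2) in \<open>simp add: geom_coeff_eq\<close>)
  finally show ?thesis by simp
qed

text \<open>The factorisation A - B cos k = c (1 - r e^{ik}) (1 - r e^{-ik}) has r = (A - S) / B,
  the smaller root of B r^2 - 2 A r + B, and c = B / (2 r).\<close>
lemma integral_cis_div_cosine:
  assumes "0 < B" "B < A"
  defines "S \<equiv> sqrt ((A + B) * (A - B))"
  shows "integral {0..2*pi} (\<lambda>k. cis (k * of_int n) / of_real (A - B * cos k))
       = of_real (2*pi / S * ((A - S) / B) ^ nat \<bar>n\<bar>)"
proof -
  define r where "r = (A - S) / B"
  have S_sq: "S^2 = (A + B) * (A - B)" unfolding S_def using assms by simp
  then have S2: "S^2 = A^2 - B^2" by (simp add: power2_eq_square algebra_simps)
  have "0 < S" unfolding S_def using assms by simp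
  have "S < A"
  proof (rule power_less_imp_less_base[of _ 2])
    show "S^2 < A^2" using S2 assms(1) by simp
  qed (use assms in simp)
  have "A - B < S"
  proof (rule power_less_imp_less_base[of _ 2])
    have "(A - B) * (A - B) < (A + B) * (A - B)" using assms by (intro mult_strict_right_mono) auto
    then show "(A - B)^2 < S^2" unfolding S_sq by (simp add: power2_eq_square)
  qed (use \<open>0 < S\<close> in simp)
  have "0 < r" "r < 1" unfolding r_def using \<open>S < A\<close> \<open>A - B < S\<close> assms by simp_all
  have rB: "r * B = A - S" unfolding r_def using assms by simp
  have "B^2 + (A - S)^2 = 2 * A * (r * B)" "B^2 - (A - S)^2 = 2 * S * (r * B)"
    unfolding rB using S2 by (simp_all add: algebra_simps power2_eq_square)
  then have "B * (B * (1 + r^2)) = B * (2 * A * r)" "B * (B * (1 - r^2)) = B * (2 * r * S)"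
    unfolding rB[symmetric] by (simp_all add: algebra_simps power2_eq_square)
  then have root: "B * (1 + r^2) = 2 * A * r" "B * (1 - r^2) = 2 * r * S"
    using assms by simp_all
  define c where "c = B / (2 * r)"
  have coeffs: "c * (1 + r^2) = A" "2 * c * r = B" "c * (1 - r^2) = S" and "c \<noteq> 0"
    unfolding c_def using root \<open>0 < r\<close> assms by (simp_all add: field_simps)
  from integral_cis_div_factored_cosine[OF \<open>0 < r\<close> \<open>r < 1\<close> \<open>c \<noteq> 0\<close>, of n] show ?thesis
    unfolding coeffs by (simp add: r_def)
qed

lemma omega_sq_eq_Omega:
  assumes "xi \<noteq> 0"
  shows "omega_sq xi w0 k
       = ((Omega_D xi w0)^2 + (Omega_0 xi w0)^2) / 2 - ((Omega_D xi w0)^2 - (Omega_0 xi w0)^2) / 2 * cos k"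
proof -
  have "(xi - cos k)^2 + (sin k)^2 = xi^2 - 2 * xi * cos k + 1"
    using sin_cos_squared_add[of k] by (simp add: power2_eq_square algebra_simps)
  then show ?thesis
    unfolding omega_sq_def Omega_D_def Omega_0_def using assms
    by (simp add: power_mult_distrib field_simps power2_eq_square)
qed

lemma Omega_0_lt_Omega_D:
  assumes "xi > 0" "w0 > 0"
  shows "(Omega_0 xi w0)^2 < (Omega_D xi w0)^2"
  unfolding Omega_0_def Omega_D_def using assms
  by (intro power_strict_mono) (auto simp: abs_if divide_strict_right_mono)

theorem mainTheorem2:
  fixes xi w0 w :: real and n :: int
  assumes "xi > 0" and "xi \<noteq> 1" and "w0 > 0"
    and "0 \<le> w" and "w < Omega_0 xi w0"
  shows "G_lat xi w0 n w =
    complex_of_real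
      (1 / sqrt (((Omega_D xi w0)^2 - w^2) * ((Omega_0 xi w0)^2 - w^2)) *
       (((Omega_D xi w0)^2 + (Omega_0 xi w0)^2 - 2 * w^2
          - 2 * sqrt (((Omega_D xi w0)^2 - w^2) * ((Omega_0 xi w0)^2 - w^2)))
        / ((Omega_D xi w0)^2 - (Omega_0 xi w0)^2)) ^ nat \<bar>n\<bar>)"
proof -
  define A where "A = ((Omega_D xi w0)^2 + (Omega_0 xi w0)^2) / 2 - w^2"
  define B where "B = ((Omega_D xi w0)^2 - (Omega_0 xi w0)^2) / 2"
  define S where "S = sqrt (((Omega_D xi w0)^2 - w^2) * ((Omega_0 xi w0)^2 - w^2))"
  have den: "omega_sq xi w0 k - w^2 = A - B * cos k" for k
    using omega_sq_eq_Omega[of xi w0 k] assms(1) unfolding A_def B_def by simp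
  have sum_diff: "A + B = (Omega_D xi w0)^2 - w^2" "A - B = (Omega_0 xi w0)^2 - w^2"
    unfolding A_def B_def by (simp_all add: field_simps)
  have "0 < B" unfolding B_def using Omega_0_lt_Omega_D assms(1,3) by simp
  moreover have "w^2 < (Omega_0 xi w0)^2" using assms(4,5) by (simp add: power_strict_mono)
  then have "B < A" using sum_diff by linarith
  ultimately have integral_eq:
    "integral {0..2*pi} (\<lambda>k. cis (k * of_int n) / of_real (omega_sq xi w0 k - w^2))
      = of_real (2*pi / S * ((A - S) / B) ^ nat \<bar>n\<bar>)"
    unfolding den S_def sum_diff[symmetric] by (rule integral_cis_div_cosine)
  have ratio: "(Omega_D xi w0)^2 + (Omega_0 xi w0)^2 - 2 * w^2 - 2 * S = 2 * (A - S)"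
    "(Omega_D xi w0)^2 - (Omega_0 xi w0)^2 = 2 * B"
    using sum_diff by simp_all
  have real_eq: "1 / (2*pi) * (2*pi / S * ((A - S) / B) ^ nat \<bar>n\<bar>) = 1 / S *
      (((Omega_D xi w0)^2 + (Omega_0 xi w0)^2 - 2 * w^2 - 2 * S)
        / ((Omega_D xi w0)^2 - (Omega_0 xi w0)^2)) ^ nat \<bar>n\<bar>"
    unfolding ratio mult_divide_mult_cancel_left_if by simp
  show ?thesis
    unfolding G_lat_def integral_eq S_def[symmetric] of_real_mult[symmetric] real_eq ..
qed

end
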